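(* The free semigroup of rank 1 with a zero adjoined, $\langle a,b\mid b^2=b,\ ab=ba=b\rangle$, is not isomorphic to any expanding automaton semigroup. Consequently (since the free semigroup of rank 1 is an expanding automaton semigroup), the class of expanding automaton semigroups is not closed under taking normal ideal extensions.
   Context: An expanding automaton is $(Q,\Sigma,t,o)$ with $Q$ a finite set of states, $\Sigma$ a finite alphabet, $t:Q\times\Sigma\to Q$ and $o:Q\times\Sigma\to\Sigma^+$. Each state $q$ induces $q:\Sigma^*\to\Sigma^*$ by $q(\emptyset)=\emptyset$, $q(\sigma w)=o(q,\sigma)\,q'(w)$ with $q'=t(q,\sigma)$; an expanding automaton semigroup is the semigroup of maps generated under composition by the states. For semigroups $S,T$, the normal ideal extension of $S$ by $T$ is the disjoint union $S\sqcup T$ with product $x\cdot y=xy$ if $x,y\in S$ or $x,y\in T$, $x\cdot y=y$ if $x\in S,y\in T$, and $x\cdot y=x$ if $x\in T,y\in S$. *)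

theory Defs
  imports Main "HOL-Library.FuncSet"
begin

record 'a sgrp =
  sg_carrier :: "'a set"
  sg_mult    :: "'a \<Rightarrow> 'a \<Rightarrow> 'a"

definition is_semigroup :: "'a sgrp \<Rightarrow> bool" where
  "is_semigroup S \<longleftrightarrow>
     (\<forall>x\<in>sg_carrier S. \<forall>y\<in>sg_carrier S. sg_mult S x y \<in> sg_carrier S) \<and>
     (\<forall>x\<in>sg_carrier S. \<forall>y\<in>sg_carrier S. \<forall>z\<in>sg_carrier S.
        sg_mult S (sg_mult S x y) z = sg_mult S x (sg_mult S y z))"

definition sg_isomorphic :: "'a sgrp \<Rightarrow> 'b sgrp \<Rightarrow> bool" where
  "sg_isomorphic S T \<longleftrightarrow>
     (\<exists>h. bij_betw h (sg_carrier S) (sg_carrier T) \<and>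
          (\<forall>x\<in>sg_carrier S. \<forall>y\<in>sg_carrier S.
              h (sg_mult S x y) = sg_mult T (h x) (h y)))"

definition expanding_automaton ::
  "'q set \<Rightarrow> 's set \<Rightarrow> ('q \<Rightarrow> 's \<Rightarrow> 'q) \<Rightarrow> ('q \<Rightarrow> 's \<Rightarrow> 's list) \<Rightarrow> bool" where
  "expanding_automaton Q \<Sigma> t out \<longleftrightarrow>
     finite Q \<and> finite \<Sigma> \<and>
     (\<forall>q\<in>Q. \<forall>\<sigma>\<in>\<Sigma>. t q \<sigma> \<in> Q \<and> out q \<sigma> \<noteq> [] \<and> set (out q \<sigma>) \<subseteq> \<Sigma>)"

fun state_map :: "('q \<Rightarrow> 's \<Rightarrow> 'q) \<Rightarrow> ('q \<Rightarrow> 's \<Rightarrow> 's list) \<Rightarrow> 'q \<Rightarrow> 's list \<Rightarrow> 's list" where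
  "state_map t out q [] = []"
| "state_map t out q (\<sigma> # w) = out q \<sigma> @ state_map t out (t q \<sigma>) w"

definition aut_semigroup ::
  "'q set \<Rightarrow> 's set \<Rightarrow> ('q \<Rightarrow> 's \<Rightarrow> 'q) \<Rightarrow> ('q \<Rightarrow> 's \<Rightarrow> 's list) \<Rightarrow> ('s list \<Rightarrow> 's list) sgrp" where
  "aut_semigroup Q \<Sigma> t out =
     \<lparr> sg_carrier = {restrict (foldr (\<circ>) (map (state_map t out) qs) id) (lists \<Sigma>) | qs.
                       qs \<noteq> [] \<and> set qs \<subseteq> Q},
       sg_mult = (\<lambda>f g. restrict (f \<circ> g) (lists \<Sigma>)) \<rparr>"

definition is_expanding_automaton_semigroup :: "'a sgrp \<Rightarrow> 'q itself \<Rightarrow> 's itself \<Rightarrow> bool" where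
  "is_expanding_automaton_semigroup S _ _ \<longleftrightarrow>
     (\<exists>(Q::'q set) (\<Sigma>::'s set) t out.
        expanding_automaton Q \<Sigma> t out \<and> sg_isomorphic S (aut_semigroup Q \<Sigma> t out))"

definition normal_ideal_ext :: "'a sgrp \<Rightarrow> 'b sgrp \<Rightarrow> ('a + 'b) sgrp" where
  "normal_ideal_ext S T =
     \<lparr> sg_carrier = Inl ` sg_carrier S \<union> Inr ` sg_carrier T,
       sg_mult = (\<lambda>x y. case (x, y) of
                     (Inl a, Inl b) \<Rightarrow> Inl (sg_mult S a b)
                   | (Inr a, Inr b) \<Rightarrow> Inr (sg_mult T a b)
                   | (Inl a, Inr b) \<Rightarrow> Inr b
                   | (Inr a, Inl b) \<Rightarrow> Inr a) \<rparr>"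

text \<open>Free semigroup of rank 1: a^n represented by n >= 1, product a^m a^n = a^(m+n).\<close>

definition free_rank1 :: "nat sgrp" where
  "free_rank1 = \<lparr> sg_carrier = {n. 1 \<le> n}, sg_mult = (+) \<rparr>"

definition trivial_sg :: "unit sgrp" where
  "trivial_sg = \<lparr> sg_carrier = {()}, sg_mult = (\<lambda>_ _. ()) \<rparr>"

text \<open>Free semigroup of rank 1 with a zero adjoined, <a,b | b^2=b, ab=ba=b>:
  the normal ideal extension of the free semigroup of rank 1 by the trivial semigroup {b}.\<close>

definition free_rank1_with_zero :: "(nat + unit) sgrp" where
  "free_rank1_with_zero = normal_ideal_ext free_rank1 trivial_sg"

end

theory Submission
  imports Defs
begin

(* Suppose h is an isomorphism from <a,b | b^2=b, ab=ba=b> onto the semigroup of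
   an expanding automaton, and write P n = h(a^n), Z = h(b).  Every element X of an automaton
   semigroup has "residuals": X(u w) = X(u) R(w) with R again in the semigroup, and the
   residual of a single state is a single state.  Since a is indecomposable, P 1 is a state;
   let P M be the state of the form P m with m maximal.  Its residuals are Z or P M, hence
   every residual of F n = P (M n) is Z or F n.  So F n is determined by its "profile":
   for each letter s the word F n [s] and whether the residual at s is Z.  Since Z F n = Z and
   maps never shorten words, F n [s] is no longer than Z [s]; so there are only finitely many
   profiles, two different F n coincide, contradicting injectivity of h. *)

lemma state_map_append:
  "state_map t out q (u @ w) = state_map t out q u @ state_map t out (foldl t q u) w"
  by (induction u arbitrary: q) auto

lemma state_maps_nil: "foldr (\<circ>) (map (state_map t out) qs) id [] = []"
  by (induction qs) auto

section \<open>Residuals in an expanding automaton semigroup\<close>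

locale automaton_sg =
  fixes Q :: "'q set" and Sig :: "'s set"
    and t :: "'q \<Rightarrow> 's \<Rightarrow> 'q" and out :: "'q \<Rightarrow> 's \<Rightarrow> 's list"
  assumes aut: "expanding_automaton Q Sig t out"
begin

abbreviation L :: "'s list set" where "L \<equiv> lists Sig"
abbreviation sm :: "'q \<Rightarrow> 's list \<Rightarrow> 's list" where "sm \<equiv> state_map t out"

text \<open>The composite map of a sequence of states, its leftmost state acting last.\<close>

definition run :: "'q list \<Rightarrow> 's list \<Rightarrow> 's list" where
  "run qs = foldr (\<circ>) (map sm qs) id"

definition car :: "('s list \<Rightarrow> 's list) set" where
  "car = sg_carrier (aut_semigroup Q Sig t out)"

definition mul :: "('s list \<Rightarrow> 's list) \<Rightarrow> ('s list \<Rightarrow> 's list) \<Rightarrow> 's list \<Rightarrow> 's list" where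
  "mul X Y = restrict (X \<circ> Y) L"

definition has_residual :: "('s list \<Rightarrow> 's list) \<Rightarrow> 's list \<Rightarrow> ('s list \<Rightarrow> 's list) \<Rightarrow> bool" where
  "has_residual X u R \<longleftrightarrow> (\<forall>w\<in>L. X (u @ w) = X u @ R w)"

lemma car_eq: "car = {restrict (run qs) L | qs. qs \<noteq> [] \<and> set qs \<subseteq> Q}"
  by (simp add: car_def aut_semigroup_def run_def)

lemma aut_mult: "sg_mult (aut_semigroup Q Sig t out) = mul"
  by (simp add: aut_semigroup_def mul_def fun_eq_iff)

lemma run_simps: "run [] = id" "run (q # qs) = sm q \<circ> run qs"
  by (simp_all add: run_def)

lemma mul_apply: "w \<in> L \<Longrightarrow> mul X Y w = X (Y w)"
  by (simp add: mul_def)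

lemma transition: "q \<in> Q \<Longrightarrow> \<sigma> \<in> Sig \<Longrightarrow> t q \<sigma> \<in> Q \<and> out q \<sigma> \<noteq> [] \<and> set (out q \<sigma>) \<subseteq> Sig"
  using aut by (auto simp: expanding_automaton_def)

lemma reach_in: "q \<in> Q \<Longrightarrow> u \<in> L \<Longrightarrow> foldl t q u \<in> Q"
  by (induction u arbitrary: q) (auto simp: transition)

text \<open>States map words to words and, the outputs being nonempty, never shorten them.\<close>

lemma state_map_expanding: "q \<in> Q \<Longrightarrow> v \<in> L \<Longrightarrow> sm q v \<in> L \<and> length v \<le> length (sm q v)"
proof (induction v arbitrary: q)
  case (Cons \<sigma> v)
  then have \<sigma>: "\<sigma> \<in> Sig" "v \<in> L" by auto
  with Cons.prems transition[of q \<sigma>]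
  have "t q \<sigma> \<in> Q" "out q \<sigma> \<noteq> []" "set (out q \<sigma>) \<subseteq> Sig" by auto
  with Cons.IH[of "t q \<sigma>"] \<sigma> show ?case by (cases "out q \<sigma>") auto
qed simp

lemma run_expanding: "set qs \<subseteq> Q \<Longrightarrow> v \<in> L \<Longrightarrow> run qs v \<in> L \<and> length v \<le> length (run qs v)"
proof (induction qs)
  case (Cons q qs)
  then show ?case using state_map_expanding[of q "run qs v"] by (fastforce simp: run_simps)
qed (simp add: run_simps)

lemma car_expanding: "X \<in> car \<Longrightarrow> v \<in> L \<Longrightarrow> X v \<in> L \<and> length v \<le> length (X v)"
  using run_expanding unfolding car_eq by force

lemma car_nil: "X \<in> car \<Longrightarrow> X [] = []"
  by (auto simp: car_eq run_def state_maps_nil)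

lemma car_eqI: "X \<in> car \<Longrightarrow> Y \<in> car \<Longrightarrow> (\<And>v. v \<in> L \<Longrightarrow> X v = Y v) \<Longrightarrow> X = Y"
  by (rule extensionalityI[of _ L]) (auto simp: car_eq)

lemma state_car: "q \<in> Q \<Longrightarrow> restrict (sm q) L \<in> car"
  unfolding car_eq by (rule CollectI, rule exI[of _ "[q]"]) (simp add: run_simps)

lemma run_cons_mul:
  assumes "q \<in> Q" "set qs \<subseteq> Q"
  shows "restrict (run (q # qs)) L = mul (restrict (sm q) L) (restrict (run qs) L)"
proof (rule ext)
  fix v show "restrict (run (q # qs)) L v = mul (restrict (sm q) L) (restrict (run qs) L) v"
    using run_expanding[OF assms(2), of v] by (cases "v \<in> L") (auto simp: run_simps mul_def)
qed

lemma state_residual: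
  "u \<in> L \<Longrightarrow> has_residual (restrict (sm q) L) u (restrict (sm (foldl t q u)) L)"
  by (simp add: has_residual_def state_map_append)

lemma run_residual: "set qs \<subseteq> Q \<Longrightarrow> u \<in> L \<Longrightarrow>
  \<exists>rs. length rs = length qs \<and> set rs \<subseteq> Q \<and> (\<forall>w. run qs (u @ w) = run qs u @ run rs w)"
proof (induction qs)
  case (Cons q qs)
  then obtain rs where rs: "length rs = length qs" "set rs \<subseteq> Q"
    "\<forall>w. run qs (u @ w) = run qs u @ run rs w" by auto
  have "foldl t q (run qs u) \<in> Q" using Cons.prems run_expanding reach_in by simp
  with rs show ?case
    by (intro exI[of _ "foldl t q (run qs u) # rs"]) (simp add: run_simps state_map_append)
qed (auto simp: run_simps)

lemma residual_exists: assumes "X \<in> car" "u \<in> L" shows "\<exists>R\<in>car. has_residual X u R"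
proof -
  obtain qs where qs: "X = restrict (run qs) L" "qs \<noteq> []" "set qs \<subseteq> Q"
    using assms(1) by (auto simp: car_eq)
  obtain rs where rs: "length rs = length qs" "set rs \<subseteq> Q" "\<forall>w. run qs (u @ w) = run qs u @ run rs w"
    using run_residual[OF qs(3) assms(2)] by auto
  have "restrict (run rs) L \<in> car" using rs qs(2) by (auto simp: car_eq)
  moreover have "has_residual X u (restrict (run rs) L)"
    using qs(1) rs(3) assms(2) by (simp add: has_residual_def)
  ultimately show ?thesis by blast
qed

lemma residual_unique:
  "has_residual X u R \<Longrightarrow> has_residual X u R' \<Longrightarrow> R \<in> car \<Longrightarrow> R' \<in> car \<Longrightarrow> R = R'"
  by (rule car_eqI) (auto simp: has_residual_def)

lemma residual_mul:
  assumes "u \<in> L" "R \<in> car" "has_residual Y u R" "has_residual X (Y u) R'"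
  shows "has_residual (mul X Y) u (mul R' R)"
  unfolding has_residual_def
proof
  fix w assume w: "w \<in> L"
  have "mul X Y (u @ w) = X (Y u @ R w)"
    using assms(1,3) w by (simp add: mul_apply has_residual_def)
  also have "\<dots> = X (Y u) @ R' (R w)"
    using assms(4) car_expanding[OF assms(2) w] by (simp add: has_residual_def)
  finally show "mul X Y (u @ w) = mul X Y u @ mul R' R w"
    using assms(1) w by (simp add: mul_apply)
qed

end

section \<open>A hypothetical automaton realisation of the free monogenic semigroup with zero\<close>

locale zero_iso = automaton_sg Q Sig t out
  for Q :: "'q set" and Sig :: "'s set" and t out +
  fixes h :: "nat + unit \<Rightarrow> 's list \<Rightarrow> 's list"
  assumes bij: "bij_betw h (sg_carrier free_rank1_with_zero) car"
    and hom: "\<forall>x\<in>sg_carrier free_rank1_with_zero. \<forall>y\<in>sg_carrier free_rank1_with_zero.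
        h (sg_mult free_rank1_with_zero x y) = mul (h x) (h y)"
begin

definition P :: "nat \<Rightarrow> 's list \<Rightarrow> 's list" where "P n = h (Inl n)"
definition Z :: "'s list \<Rightarrow> 's list" where "Z = h (Inr ())"

lemma carrier_zero: "sg_carrier free_rank1_with_zero = Inl ` {n. 1 \<le> n} \<union> {Inr ()}"
  by (simp add: free_rank1_with_zero_def normal_ideal_ext_def free_rank1_def trivial_sg_def)

lemma mult_zero:
  "sg_mult free_rank1_with_zero (Inl a) (Inl b) = Inl (a + b)"
  "sg_mult free_rank1_with_zero (Inl a) (Inr u) = Inr ()"
  "sg_mult free_rank1_with_zero (Inr u) (Inl a) = Inr ()"
  "sg_mult free_rank1_with_zero (Inr u) (Inr u') = Inr ()"
  by (simp_all add: free_rank1_with_zero_def normal_ideal_ext_def free_rank1_def trivial_sg_def)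

lemma P_car: "1 \<le> n \<Longrightarrow> P n \<in> car"
  using bij_betw_apply[OF bij] by (auto simp: P_def carrier_zero)

lemma Z_car: "Z \<in> car"
  using bij_betw_apply[OF bij] by (auto simp: Z_def carrier_zero)

lemma P_mul: "1 \<le> m \<Longrightarrow> 1 \<le> n \<Longrightarrow> mul (P m) (P n) = P (m + n)"
  using hom by (auto simp: P_def carrier_zero mult_zero)

lemma Z_mul: assumes "X \<in> car" shows "mul Z X = Z" "mul X Z = Z"
proof -
  obtain y where "y \<in> sg_carrier free_rank1_with_zero" "X = h y"
    using assms bij_betw_imp_surj_on[OF bij] by auto
  then show "mul Z X = Z" "mul X Z = Z" using hom by (auto simp: Z_def carrier_zero mult_zero)
qed

lemma P_inj: "1 \<le> m \<Longrightarrow> 1 \<le> n \<Longrightarrow> P m = P n \<Longrightarrow> m = n"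
  using bij_betw_imp_inj_on[OF bij] unfolding inj_on_def by (auto simp: P_def carrier_zero)

lemma P_ne_Z: "1 \<le> m \<Longrightarrow> P m \<noteq> Z"
  using bij_betw_imp_inj_on[OF bij] unfolding inj_on_def by (auto simp: P_def Z_def carrier_zero)

lemma car_cases: "X \<in> car \<Longrightarrow> X = Z \<or> (\<exists>n\<ge>1. X = P n)"
  using bij_betw_imp_surj_on[OF bij] by (auto simp: carrier_zero P_def Z_def)

text \<open>Since Z X = Z and Z never shortens words, no element makes a word longer than Z does.\<close>

lemma length_le_zero: assumes X: "X \<in> car" and v: "v \<in> L" shows "length (X v) \<le> length (Z v)"
proof -
  have "Z (X v) = Z v" using Z_mul(1)[OF X] mul_apply[OF v, of Z X] by simp
  then show ?thesis using car_expanding[OF Z_car car_expanding[OF X v, THEN conjunct1]] by simp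
qed

text \<open>The generator a is indecomposable, so its image is a single state.\<close>

lemma P1_state: "\<exists>q\<in>Q. restrict (sm q) L = P 1"
proof -
  obtain qs where qs: "P 1 = restrict (run qs) L" "qs \<noteq> []" "set qs \<subseteq> Q"
    using P_car[of 1] by (auto simp: car_eq)
  then obtain q rs where q: "qs = q # rs" by (cases qs) auto
  show ?thesis
  proof (cases "rs = []")
    case True then show ?thesis using qs q by (auto simp: run_simps)
  next
    case False
    let ?X = "restrict (sm q) L" and ?Y = "restrict (run rs) L"
    have X: "?X \<in> car" using qs q by (auto intro: state_car)
    have Y: "?Y \<in> car" using qs q False by (auto simp: car_eq)
    have P1: "P 1 = mul ?X ?Y" using qs q run_cons_mul by simp
    show ?thesis
    proof (cases "?X = Z \<or> ?Y = Z")
      case True then show ?thesis using P1 Z_mul X Y P_ne_Z[of 1] by auto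
    next
      case False
      then obtain a b where "1 \<le> a" "1 \<le> b" "?X = P a" "?Y = P b"
        using car_cases[OF X] car_cases[OF Y] by auto
      then show ?thesis using P1 P_mul P_inj[of 1 "a + b"] by auto
    qed
  qed
qed

definition E :: "nat set" where "E = {m. 1 \<le> m \<and> (\<exists>q\<in>Q. restrict (sm q) L = P m)}"
definition M :: nat where "M = Max E"

lemma E_finite: "finite E"
proof -
  have "P ` E \<subseteq> (\<lambda>q. restrict (sm q) L) ` Q" by (auto simp: E_def) (metis image_eqI)
  then have "finite (P ` E)"
    by (rule finite_subset) (use aut in \<open>simp add: expanding_automaton_def\<close>)
  moreover have "inj_on P E" by (rule inj_onI) (auto simp: E_def intro: P_inj)
  ultimately show ?thesis using finite_image_iff by blast
qed

lemma M_in_E: "M \<in> E" and M_pos: "1 \<le> M" and M_max: "m \<in> E \<Longrightarrow> m \<le> M"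
proof -
  have "1 \<in> E" using P1_state by (auto simp: E_def)
  then show "M \<in> E" using E_finite unfolding M_def by (intro Max_in) auto
  then show "1 \<le> M" by (simp add: E_def)
  show "m \<in> E \<Longrightarrow> m \<le> M" using E_finite unfolding M_def by simp
qed

lemma power_residual:
  "1 \<le> n \<Longrightarrow> u \<in> L \<Longrightarrow> \<exists>R. (R = Z \<or> (\<exists>m\<ge>n. R = P m)) \<and> has_residual (P n) u R"
proof (induction n arbitrary: u rule: nat_induct_at_least)
  case base
  obtain R where "R \<in> car" "has_residual (P 1) u R" using residual_exists[OF P_car base] by auto
  then show ?case using car_cases by auto
next
  case (Suc n)
  obtain R where R: "R = Z \<or> (\<exists>m\<ge>n. R = P m)" "has_residual (P n) u R"
    using Suc.IH[OF Suc.prems] by blast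
  have RC: "R \<in> car" using R(1) P_car Z_car Suc.hyps by auto
  obtain R' where R': "R' \<in> car" "has_residual (P 1) (P n u) R'"
    using residual_exists[OF P_car] car_expanding[OF P_car] Suc by blast
  have "has_residual (P (Suc n)) u (mul R' R)"
    using residual_mul[OF Suc.prems RC R(2) R'(2)] P_mul[of 1 n] Suc.hyps by simp
  moreover have "mul R' R = Z \<or> (\<exists>m\<ge>Suc n. mul R' R = P m)"
  proof (cases "R' = Z \<or> R = Z")
    case True then show ?thesis using Z_mul RC R'(1) by auto
  next
    case False
    then obtain a m where "1 \<le> a" "R' = P a" "n \<le> m" "R = P m"
      using car_cases[OF R'(1)] R(1) by auto
    then have "mul R' R = P (a + m)" "Suc n \<le> a + m" using P_mul[of a m] Suc.hyps by auto
    then show ?thesis by blast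
  qed
  ultimately show ?case by blast
qed

lemma top_residual: assumes u: "u \<in> L"
  shows "has_residual (P M) u Z \<or> has_residual (P M) u (P M)"
proof -
  obtain p where p: "p \<in> Q" "restrict (sm p) L = P M" using M_in_E by (auto simp: E_def)
  let ?S = "restrict (sm (foldl t p u)) L"
  have S: "?S \<in> car" "has_residual (P M) u ?S"
    using state_car reach_in p u state_residual[OF u, of p] by auto
  obtain R where R: "R = Z \<or> (\<exists>m\<ge>M. R = P m)" "has_residual (P M) u R"
    using power_residual[OF M_pos u] by blast
  have "R \<in> car" using R(1) P_car Z_car M_pos by auto
  then have SR: "?S = R" using residual_unique S R(2) by blast
  show ?thesis
  proof (cases "R = Z")
    case False
    then obtain m where m: "m \<ge> M" "R = P m" using R(1) by blast
    then have "m \<in> E" using SR reach_in[OF p(1) u] M_pos by (auto simp: E_def)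
    then show ?thesis using M_max m R(2) by force
  qed (use R in simp)
qed

definition F :: "nat \<Rightarrow> 's list \<Rightarrow> 's list" where "F n = P (M * n)"

lemma F_car: "1 \<le> n \<Longrightarrow> F n \<in> car"
  using M_pos by (auto simp: F_def intro!: P_car)

lemma F_Suc: "1 \<le> n \<Longrightarrow> F (Suc n) = mul (P M) (F n)"
  using P_mul[of M "M * n"] M_pos by (simp add: F_def)

lemma F_residual: "1 \<le> n \<Longrightarrow> u \<in> L \<Longrightarrow> has_residual (F n) u Z \<or> has_residual (F n) u (F n)"
proof (induction n arbitrary: u rule: nat_induct_at_least)
  case base then show ?case using top_residual by (simp add: F_def)
next
  case (Suc n)
  obtain G where G: "G = Z \<or> G = F n" "has_residual (F n) u G" using Suc.IH[OF Suc.prems] by blast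
  have GC: "G \<in> car" using G(1) Z_car F_car Suc.hyps by auto
  obtain R where R: "R = Z \<or> R = P M" "has_residual (P M) (F n u) R"
    using top_residual car_expanding[OF F_car[OF Suc.hyps] Suc.prems] by blast
  have RC: "R \<in> car" using R(1) Z_car P_car M_pos by auto
  have "has_residual (F (Suc n)) u (mul R G)"
    using residual_mul[OF Suc.prems GC G(2) R(2)] F_Suc[OF Suc.hyps] by simp
  moreover have "mul R G = Z \<or> mul R G = F (Suc n)"
  proof (cases "R = Z \<or> G = Z")
    case True then show ?thesis using Z_mul[OF GC] Z_mul[OF RC] by auto
  next
    case False
    then have "R = P M" "G = F n" using R(1) G(1) by auto
    then show ?thesis using F_Suc[OF Suc.hyps] by simp
  qed
  ultimately show ?case by (elim disjE) simp_all
qed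

definition profile :: "nat \<Rightarrow> 's \<Rightarrow> 's list \<times> bool" where
  "profile n = restrict (\<lambda>\<sigma>. (F n [\<sigma>], has_residual (F n) [\<sigma>] Z)) Sig"

lemma profile_determines:
  assumes i: "1 \<le> i" and j: "1 \<le> j" and eq: "profile i = profile j"
  shows "F i = F j"
proof (rule car_eqI[OF F_car[OF i] F_car[OF j]])
  fix v assume "v \<in> L"
  then show "F i v = F j v"
  proof (induction v)
    case Nil then show ?case using car_nil[OF F_car[OF i]] car_nil[OF F_car[OF j]] by simp
  next
    case (Cons \<sigma> w)
    then have \<sigma>: "\<sigma> \<in> Sig" and w: "w \<in> L" by auto
    have same: "F i [\<sigma>] = F j [\<sigma>]" "has_residual (F i) [\<sigma>] Z = has_residual (F j) [\<sigma>] Z"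
      using fun_cong[OF eq, of \<sigma>] \<sigma> by (simp_all add: profile_def)
    have split: "X (\<sigma> # w) = X [\<sigma>] @ R w" if "has_residual X [\<sigma>] R" for X R
      using that w unfolding has_residual_def by (metis append_Cons append_Nil)
    show ?case
    proof (cases "has_residual (F i) [\<sigma>] Z")
      case True
      then show ?thesis using split[of "F i" Z] split[of "F j" Z] same by simp
    next
      case False
      then have "has_residual (F i) [\<sigma>] (F i)" "has_residual (F j) [\<sigma>] (F j)"
        using F_residual[OF i, of "[\<sigma>]"] F_residual[OF j, of "[\<sigma>]"] same(2) \<sigma> by simp_all
      then have "F i (\<sigma> # w) = F i [\<sigma>] @ F i w" "F j (\<sigma> # w) = F j [\<sigma>] @ F j w"
        using split by blast+
      then show ?thesis using same(1) Cons.IH w by simp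
    qed
  qed
qed

text \<open>Profiles take values in a finite set, since F n [s] is no longer than Z [s].\<close>

lemma finite_profiles: "finite (profile ` {1..})"
proof -
  define C where "C = Max ((\<lambda>\<sigma>. length (Z [\<sigma>])) ` Sig)"
  define W where "W = {xs. set xs \<subseteq> Sig \<and> length xs \<le> C}"
  have fin: "finite Sig" using aut by (simp add: expanding_automaton_def)
  have "F n [\<sigma>] \<in> W" if "1 \<le> n" "\<sigma> \<in> Sig" for n \<sigma>
  proof -
    have "length (F n [\<sigma>]) \<le> length (Z [\<sigma>])" using length_le_zero F_car that by simp
    also have "\<dots> \<le> C" unfolding C_def using fin that(2) by (intro Max_ge) auto
    finally show ?thesis using car_expanding[OF F_car, of n "[\<sigma>]"] that by (auto simp: W_def)
  qed
  then have "profile ` {1..} \<subseteq> (\<Pi>\<^sub>E \<sigma>\<in>Sig. W \<times> UNIV)" by (auto simp: profile_def)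
  moreover have "finite (\<Pi>\<^sub>E \<sigma>\<in>Sig. W \<times> (UNIV :: bool set))"
    using fin finite_lists_length_le[OF fin] by (intro finite_PiE) (auto simp: W_def)
  ultimately show ?thesis by (rule finite_subset)
qed

theorem contradiction: False
proof -
  have "\<not> inj_on profile {1..}"
  proof
    assume "inj_on profile {1..}"
    with finite_profiles have "finite {1::nat..}" by (rule finite_imageD)
    then show False using infinite_Ici[of "1::nat"] by contradiction
  qed
  then obtain i j where ij: "1 \<le> i" "1 \<le> j" "i \<noteq> j" "profile i = profile j"
    by (meson atLeast_iff inj_onI)
  then have "P (M * i) = P (M * j)" using profile_determines[OF ij(1,2,4)] by (simp add: F_def)
  moreover have "1 \<le> M * i" "1 \<le> M * j" using ij M_pos by simp_all
  ultimately have "M * i = M * j" by (rule P_inj[rotated 2])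
  then show False using ij(3) M_pos by simp
qed

end

theorem free_rank1_with_zero_not_automaton:
  assumes "expanding_automaton Q Sig t out"
  shows "\<not> sg_isomorphic free_rank1_with_zero (aut_semigroup Q Sig t out)"
proof
  assume "sg_isomorphic free_rank1_with_zero (aut_semigroup Q Sig t out)"
  then obtain h where "bij_betw h (sg_carrier free_rank1_with_zero) (sg_carrier (aut_semigroup Q Sig t out))"
    "\<forall>x\<in>sg_carrier free_rank1_with_zero. \<forall>y\<in>sg_carrier free_rank1_with_zero.
        h (sg_mult free_rank1_with_zero x y) = sg_mult (aut_semigroup Q Sig t out) (h x) (h y)"
    unfolding sg_isomorphic_def by blast
  then interpret zero_iso Q Sig t out h
    using assms by unfold_locales (simp_all add: automaton_sg.car_def automaton_sg.aut_mult assms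
        automaton_sg_def)
  show False by (rule contradiction)
qed

section \<open>The free monogenic semigroup and the trivial semigroup are automaton semigroups\<close>

abbreviation doubling_t :: "nat \<Rightarrow> nat \<Rightarrow> nat" where "doubling_t \<equiv> \<lambda>q s. 0"
abbreviation doubling_out :: "nat \<Rightarrow> nat \<Rightarrow> nat list" where "doubling_out \<equiv> \<lambda>q s. [0, 0]"

lemma doubling_run:
  assumes "qs \<noteq> []"
  shows "foldr (\<circ>) (map (state_map doubling_t doubling_out) qs) id w
           = replicate (2 ^ length qs * length w) 0"
proof -
  have double: "state_map doubling_t doubling_out q v = replicate (2 * length v) 0" for q v
    by (induction v arbitrary: q) auto
  show ?thesis using assms
  proof (induction qs)
    case (Cons q qs) then show ?case by (cases "qs = []") (auto simp: double)
  qed simp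
qed

lemma doubling_carrier:
  "sg_carrier (aut_semigroup {0} {0} doubling_t doubling_out)
     = (\<lambda>k. restrict (\<lambda>w. replicate (2 ^ k * length w) 0) (lists {0})) ` {k. 1 \<le> k}"
  (is "_ = ?D ` _")
proof (intro equalityI subsetI)
  fix x assume "x \<in> sg_carrier (aut_semigroup {0} {0} doubling_t doubling_out)"
  then obtain qs :: "nat list" where qs: "qs \<noteq> []"
    "x = restrict (foldr (\<circ>) (map (state_map doubling_t doubling_out) qs) id) (lists {0})"
    by (auto simp: aut_semigroup_def)
  have "x = ?D (length qs)" unfolding qs(2) doubling_run[OF qs(1)] ..
  moreover have "1 \<le> length qs" using qs(1) by (simp add: Suc_le_eq)
  ultimately show "x \<in> ?D ` {k. 1 \<le> k}" by blast
next
  fix x assume "x \<in> ?D ` {k. 1 \<le> k}"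
  then obtain k where k: "1 \<le> k" "x = ?D k" by blast
  have ne: "replicate k (0::nat) \<noteq> []" using k(1) by auto
  have "x = restrict (foldr (\<circ>) (map (state_map doubling_t doubling_out) (replicate k 0)) id) (lists {0})"
    unfolding k(2) doubling_run[OF ne] by simp
  moreover have "set (replicate k (0::nat)) \<subseteq> {0}" by (simp add: set_replicate_conv_if)
  ultimately show "x \<in> sg_carrier (aut_semigroup {0} {0} doubling_t doubling_out)"
    using ne unfolding aut_semigroup_def sgrp.select_convs by blast
qed

lemma free_rank1_automaton: "is_expanding_automaton_semigroup free_rank1 TYPE(nat) TYPE(nat)"
proof -
  define D where "D k = restrict (\<lambda>w. replicate (2 ^ k * length w) (0::nat)) (lists {0::nat})" for k
  have inj: "inj_on D {k. 1 \<le> k}"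
  proof (rule inj_onI)
    fix m n assume "D m = D n"
    then have "length (D m [0]) = length (D n [0])" by simp
    then show "m = n" by (simp add: D_def)
  qed
  have hom: "D (m + n) = restrict (D m \<circ> D n) (lists {0})" for m n
  proof
    fix w :: "nat list"
    show "D (m + n) w = restrict (D m \<circ> D n) (lists {0}) w"
    proof (cases "w \<in> lists {0}")
      case True
      then have "D n w \<in> lists {0}" by (auto simp: D_def)
      with True show ?thesis by (simp add: D_def power_add mult.assoc)
    qed (simp add: D_def)
  qed
  have "sg_isomorphic free_rank1 (aut_semigroup {0} {0} doubling_t doubling_out)"
    unfolding sg_isomorphic_def
  proof (intro exI conjI)
    show "bij_betw D (sg_carrier free_rank1) (sg_carrier (aut_semigroup {0} {0} doubling_t doubling_out))"
      using inj by (simp add: bij_betw_def doubling_carrier D_def[symmetric] free_rank1_def)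
  qed (simp add: free_rank1_def aut_semigroup_def hom)
  moreover have "expanding_automaton {0::nat} {0::nat} doubling_t doubling_out"
    by (simp add: expanding_automaton_def)
  ultimately show ?thesis unfolding is_expanding_automaton_semigroup_def by blast
qed

text \<open>Over the empty alphabet the only word is the empty one, so the semigroup is trivial.\<close>

lemma trivial_automaton: "is_expanding_automaton_semigroup trivial_sg TYPE(nat) TYPE(nat)"
proof -
  let ?t = "\<lambda>q s. 0::nat" and ?o = "\<lambda>q s. [0::nat]"
  define e where "e = restrict (\<lambda>w. [] :: nat list) (lists ({} :: nat set))"
  have to_e: "restrict f (lists {}) = e" if "f [] = []" for f :: "nat list \<Rightarrow> nat list"
    using that by (auto simp: e_def fun_eq_iff)
  have all_e: "restrict (foldr (\<circ>) (map (state_map ?t ?o) qs) id) (lists {}) = e" for qs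
    by (rule to_e, rule state_maps_nil)
  have car: "sg_carrier (aut_semigroup {0::nat} ({}::nat set) ?t ?o) = {e}"
    unfolding aut_semigroup_def sgrp.select_convs all_e by (auto intro!: exI[of _ "[0::nat]"])
  have e_idem: "restrict (e \<circ> e) (lists {}) = e" by (rule to_e) (simp add: e_def)
  have "sg_isomorphic trivial_sg (aut_semigroup {0::nat} ({}::nat set) ?t ?o)"
    unfolding sg_isomorphic_def
  proof (intro exI conjI)
    show "bij_betw (\<lambda>_. e) (sg_carrier trivial_sg) (sg_carrier (aut_semigroup {0::nat} ({}::nat set) ?t ?o))"
      by (simp add: car trivial_sg_def bij_betw_def)
  qed (use e_idem in \<open>simp add: trivial_sg_def aut_semigroup_def\<close>)
  moreover have "expanding_automaton {0::nat} ({}::nat set) ?t ?o"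
    by (simp add: expanding_automaton_def)
  ultimately show ?thesis unfolding is_expanding_automaton_semigroup_def by blast
qed

theorem mainTheorem15:
  shows "(\<forall>(Q::'q set) (\<Sigma>::'s set) t out.
            expanding_automaton Q \<Sigma> t out \<longrightarrow>
            \<not> sg_isomorphic free_rank1_with_zero (aut_semigroup Q \<Sigma> t out))
       \<and> is_expanding_automaton_semigroup free_rank1 TYPE(nat) TYPE(nat)
       \<and> is_expanding_automaton_semigroup trivial_sg TYPE(nat) TYPE(nat)
       \<and> \<not> is_expanding_automaton_semigroup (normal_ideal_ext free_rank1 trivial_sg)
             TYPE('q) TYPE('s)"
  using free_rank1_with_zero_not_automaton free_rank1_automaton trivial_automaton
  unfolding is_expanding_automaton_semigroup_def free_rank1_with_zero_def[symmetric]
  by blast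

end
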